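(* Let $1\le k\le n/2$, $\gamma=k/n$, $\varepsilon\in[0,1]$, let $g\colon\{0,1\}^m\to\{0,1\}^n$ be a $d$-local function, and let $\mathcal{P}_g=g(\mathcal{U}^m)$. Suppose there are $r'\ge1$ non-connected neighborhoods $N_g(i_1),\dots,N_g(i_{r'})$ each of which is Type-1, i.e., for each $a$, with $s_a=|N_g(i_a)|$, the marginal $\mathcal{P}_g|_{N_g(i_a)}$ has total variation distance more than $\varepsilon$ from $\mathcal{U}^{s_a}_\gamma$. Then $$\|\mathcal{P}_g-\mathcal{D}_k\|\ge 1-2\sqrt{2n}\cdot\exp\{-\varepsilon^2 r'/2\}.$$
   Context: $\mathcal{U}^m$ is uniform on $\{0,1\}^m$; $\mathcal{U}^s_\gamma$ is the product distribution on $\{0,1\}^s$ with each bit $1$ independently with probability $\gamma$; $\mathcal{D}_k$ is uniform on strings in $\{0,1\}^n$ of Hamming weight $k$. $\mathcal{P}|_T$ denotes the marginal of $\mathcal{P}$ on coordinates $T$. A function $g$ is $d$-local if each output bit depends on at most $d$ input bits; $I_g(i)$ is the set of input coordinates on which output $i$ depends; $N_g(i)=\{j: I_g(j)\cap I_g(i)\neq\emptyset\}$. Neighborhoods $N_g(i_1),\dots,N_g(i_{r'})$ are non-connected if the sets $\bigcup_{j\in N_g(i_a)}I_g(j)$ are pairwise disjoint. $\|\cdot\|$ is total variation distance. *)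

theory Defs
  imports "HOL-Probability.Probability"
begin

text \<open>Bit strings of length n are boolean lists of length n; True = bit 1.\<close>

definition bitstrings :: "nat \<Rightarrow> bool list set" where
  "bitstrings n = {xs. length xs = n}"

definition unif_bits :: "nat \<Rightarrow> bool list pmf" where
  "unif_bits m = pmf_of_set (bitstrings m)"

definition D_weight :: "nat \<Rightarrow> nat \<Rightarrow> bool list pmf" where
  "D_weight n k = pmf_of_set {xs \<in> bitstrings n. count_list xs True = k}"

definition tv_dist :: "'a pmf \<Rightarrow> 'a pmf \<Rightarrow> real" where
  "tv_dist p q = (SUP A. \<bar>measure_pmf.prob p A - measure_pmf.prob q A\<bar>)"

definition marginal :: "bool list pmf \<Rightarrow> nat set \<Rightarrow> (nat \<Rightarrow> bool) pmf" where
  "marginal P T = map_pmf (\<lambda>xs j. if j \<in> T then xs ! j else False) P"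

definition biased_bits :: "nat set \<Rightarrow> real \<Rightarrow> (nat \<Rightarrow> bool) pmf" where
  "biased_bits T \<gamma> = Pi_pmf T False (\<lambda>_. bernoulli_pmf \<gamma>)"

definition dep_set :: "(bool list \<Rightarrow> bool list) \<Rightarrow> nat \<Rightarrow> nat \<Rightarrow> nat set" where
  "dep_set g m i = {j. j < m \<and> (\<exists>x \<in> bitstrings m. g x ! i \<noteq> g (x[j := \<not> x ! j]) ! i)}"

definition is_local :: "(bool list \<Rightarrow> bool list) \<Rightarrow> nat \<Rightarrow> nat \<Rightarrow> nat \<Rightarrow> bool" where
  "is_local g m n d \<longleftrightarrow> (\<forall>i<n. card (dep_set g m i) \<le> d)"

definition nbhd :: "(bool list \<Rightarrow> bool list) \<Rightarrow> nat \<Rightarrow> nat \<Rightarrow> nat \<Rightarrow> nat set" where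
  "nbhd g m n i = {j. j < n \<and> dep_set g m j \<inter> dep_set g m i \<noteq> {}}"

definition nbhd_inputs :: "(bool list \<Rightarrow> bool list) \<Rightarrow> nat \<Rightarrow> nat \<Rightarrow> nat \<Rightarrow> nat set" where
  "nbhd_inputs g m n i = (\<Union>j \<in> nbhd g m n i. dep_set g m j)"

end

theory Submission
  imports Defs
begin

text \<open>
  Fix a distinguishing event \<open>B\<^sub>a\<close> for each of the \<open>r'\<close> Type-1 neighbourhoods and count how many of
  the tests \<open>y|\<^bsub>N(i\<^sub>a)\<^esub> \<in> B\<^sub>a\<close> a string \<open>y\<close> passes. Because the neighbourhoods read disjoint sets
  of input bits, under \<open>g(U\<^sup>m)\<close> the tests are independent; under the product measure
  \<open>(U\<^sub>\<gamma>)\<^sup>n\<close> they are independent since the neighbourhoods are disjoint sets of output bits.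
  Their expected counts differ by more than \<open>\<epsilon>r'\<close>, so by Hoeffding's inequality a threshold
  halfway between them is crossed in the wrong direction with probability at most
  \<open>exp(-\<epsilon>\<^sup>2r'/2)\<close> under either distribution.
  Finally \<open>D\<^sub>k\<close> is \<open>(U\<^sub>\<gamma>)\<^sup>n\<close> conditioned on weight \<open>k\<close>, an event of probability at least \<open>1/(2\<surd>n)\<close>,
  so events rare under the product measure stay rare under \<open>D\<^sub>k\<close> up to a factor \<open>2\<surd>n\<close>.
\<close>

section \<open>Mass of the binomial distribution at its mean\<close>

lemma incseq_one_plus_inverse_power: "incseq (\<lambda>j. (1 + 1 / real j) ^ j)"
proof (rule incseq_SucI)
  fix j :: nat
  show "(1 + 1 / real j) ^ j \<le> (1 + 1 / real (Suc j)) ^ Suc j"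
  proof (cases "j = 0")
    case False
    then have j_pos: "real j > 0" by simp
    have "1 + real (Suc j) * (- 1 / (real (Suc j))^2) \<le> (1 + (- 1 / (real (Suc j))^2)) ^ Suc j"
      by (rule Bernoulli_inequality) (simp add: divide_simps del: of_nat_Suc)
    moreover have "1 + real (Suc j) * (- 1 / (real (Suc j))^2) = real j / real (Suc j)"
      by (simp add: power2_eq_square divide_simps del: of_nat_Suc)
    moreover have "1 + (- 1 / (real (Suc j))^2) = real j * real (Suc (Suc j)) / (real (Suc j))^2"
      by (simp add: power2_eq_square divide_simps del: of_nat_Suc) (simp add: algebra_simps)
    ultimately have bernoulli: "real j / real (Suc j) \<le> (real j * real (Suc (Suc j)) / (real (Suc j))^2) ^ Suc j"
      by simp
    have "(1 + 1 / real j) ^ j = (real (Suc j) / real j) ^ j"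
      using j_pos by (simp add: field_simps)
    also have "\<dots> = (real (Suc j) / real j) ^ Suc j * (real j / real (Suc j))"
      using j_pos by (simp add: power_Suc)
    also have "\<dots> \<le> (real (Suc j) / real j) ^ Suc j * (real j * real (Suc (Suc j)) / (real (Suc j))^2) ^ Suc j"
      by (intro mult_left_mono bernoulli) simp
    also have "\<dots> = (real (Suc (Suc j)) / real (Suc j)) ^ Suc j"
      unfolding power_mult_distrib[symmetric] using j_pos
      by (intro arg_cong[where f = "\<lambda>x. x ^ Suc j"]) (simp add: power2_eq_square del: of_nat_Suc)
    also have "\<dots> = (1 + 1 / real (Suc j)) ^ Suc j"
      by (simp add: field_simps)
    finally show ?thesis .
  qed simp
qed

definition binomial_mean_mass :: "nat \<Rightarrow> nat \<Rightarrow> real" where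
  "binomial_mean_mass N K = real (N choose K) * real K ^ K * real (N - K) ^ (N - K) / real N ^ N"

lemma binomial_mean_mass_nonneg: "binomial_mean_mass N K \<ge> 0"
  unfolding binomial_mean_mass_def by simp

lemma pmf_binomial_at_mean:
  assumes "0 < N" "K \<le> N"
  shows "pmf (binomial_pmf N (real K / real N)) K = binomial_mean_mass N K"
proof -
  have "1 - real K / real N = real (N - K) / real N"
    using assms by (simp add: of_nat_diff field_simps)
  moreover have "real N ^ K * real N ^ (N - K) = real N ^ N"
    using assms by (simp add: power_add[symmetric])
  ultimately show ?thesis
    using assms by (simp add: pmf_binomial power_divide binomial_mean_mass_def)
qed

lemma binomial_mean_mass_Suc_Suc_le:
  assumes "1 \<le> K" "K \<le> N"
  shows "binomial_mean_mass (Suc N) (Suc K) \<le> binomial_mean_mass N K"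
proof -
  have Kp: "real K > 0" and Np: "real N > 0" using assms by auto
  have choose: "real (Suc N choose Suc K) * real (Suc K) = real (N choose K) * real (Suc N)"
    by (metis Suc_times_binomial_eq mult.commute of_nat_mult)
  have "(real (Suc K) / real K) ^ K \<le> (real (Suc N) / real N) ^ N"
    using incseq_one_plus_inverse_power[THEN incseqD, OF assms(2)] Kp Np by (simp add: field_simps)
  then have "real (Suc K) ^ K / real (Suc N) ^ N \<le> real K ^ K / real N ^ N"
    using Kp Np by (simp add: power_divide divide_le_eq le_divide_eq field_simps)
  then have "real (N choose K) * real (N - K) ^ (N - K) * (real (Suc K) ^ K / real (Suc N) ^ N)
      \<le> real (N choose K) * real (N - K) ^ (N - K) * (real K ^ K / real N ^ N)"
    by (intro mult_left_mono) auto
  moreover have "binomial_mean_mass (Suc N) (Suc K)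
      = real (N choose K) * real (N - K) ^ (N - K) * (real (Suc K) ^ K / real (Suc N) ^ N)"
  proof -
    have "binomial_mean_mass (Suc N) (Suc K)
        = real (Suc N choose Suc K) * real (Suc K) * real (Suc K) ^ K * real (N - K) ^ (N - K)
          / (real (Suc N) * real (Suc N) ^ N)"
      unfolding binomial_mean_mass_def by (simp add: algebra_simps)
    also have "\<dots> = real (N choose K) * real (N - K) ^ (N - K) * (real (Suc K) ^ K / real (Suc N) ^ N)"
      unfolding choose by (simp del: of_nat_Suc)
    finally show ?thesis .
  qed
  moreover have "binomial_mean_mass N K = real (N choose K) * real (N - K) ^ (N - K) * (real K ^ K / real N ^ N)"
    unfolding binomial_mean_mass_def by simp
  ultimately show ?thesis by simp
qed

lemma binomial_mean_mass_central: "binomial_mean_mass (2 * K) K = real (2 * K choose K) / 4 ^ K"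
proof (cases "K = 0")
  case False
  have "real (2 * K) ^ (2 * K) = 4 ^ K * (real K ^ K * real K ^ K)"
    by (simp add: power_mult_distrib power_mult power_add[symmetric] mult_2[symmetric])
  then show ?thesis
    using False by (simp add: binomial_mean_mass_def mult.assoc)
qed (simp add: binomial_mean_mass_def)

lemma central_binomial_Suc:
  "(2 * Suc K choose Suc K) * Suc K = 2 * (2 * K + 1) * (2 * K choose K)"
proof -
  have a: "(2 * Suc K choose Suc K) * Suc K = Suc (Suc (2 * K)) * (Suc (2 * K) choose K)"
    using Suc_times_binomial_eq[of "Suc (2 * K)" K] by simp
  have b: "(Suc (2 * K) choose K) * Suc K = Suc (2 * K) * (2 * K choose K)"
    using binomial_absorb_comp[of "Suc (2 * K)" K] by (simp add: Suc_diff_le mult.commute)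
  have "(2 * Suc K choose Suc K) * Suc K * Suc K = Suc (Suc (2 * K)) * ((Suc (2 * K) choose K) * Suc K)"
    unfolding a by (simp only: mult.assoc)
  also have "\<dots> = (2 * (2 * K + 1) * (2 * K choose K)) * Suc K"
    unfolding b by simp
  finally show ?thesis
    using mult_right_cancel[of "Suc K"] by blast
qed

lemma central_binomial_sq_lower:
  assumes "1 \<le> K"
  shows "16 ^ K \<le> 4 * K * (2 * K choose K) ^ 2"
  using assms
proof (induction K rule: dec_induct)
  case (step K)
  define c where "c = 2 * K choose K"
  define c' where "c' = 2 * Suc K choose Suc K"
  have rec: "c' * Suc K = 2 * (2 * K + 1) * c"
    unfolding c_def c'_def by (rule central_binomial_Suc)
  have "16 ^ Suc K \<le> 16 * (4 * K * c ^ 2)"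
    using step.IH unfolding c_def by simp
  then have "16 ^ Suc K * Suc K \<le> 16 * (4 * K * c ^ 2) * Suc K"
    by (rule mult_right_mono) simp
  also have "\<dots> = 16 * c ^ 2 * (4 * K * Suc K)"
    by (simp only: mult_ac)
  also have "\<dots> \<le> 16 * c ^ 2 * (2 * K + 1) ^ 2"
    by (intro mult_left_mono) (simp_all add: power2_eq_square)
  also have "\<dots> = 4 * Suc K * c' ^ 2 * Suc K"
  proof -
    have "4 * (c' * Suc K) ^ 2 = 4 * (2 * (2 * K + 1) * c) ^ 2" by (simp only: rec)
    then show ?thesis by (simp only: power_mult_distrib power2_eq_square mult_ac)
  qed
  finally have "16 ^ Suc K \<le> 4 * Suc K * c' ^ 2"
    using mult_le_cancel2 zero_less_Suc by blast
  then show ?case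
    unfolding c'_def .
qed simp

lemma binomial_mean_mass_central_lower:
  assumes "1 \<le> K"
  shows "1 / (2 * sqrt (real K)) \<le> binomial_mean_mass (2 * K) K"
proof -
  have "(4::real) ^ K * 4 ^ K = 16 ^ K"
    by (simp add: power_mult_distrib[symmetric])
  then have sq: "(2 * sqrt (real K) * binomial_mean_mass (2 * K) K) ^ 2
      = 4 * real K * real (2 * K choose K) ^ 2 / 16 ^ K"
    unfolding binomial_mean_mass_central by (simp add: power_mult_distrib power_divide power2_eq_square)
  have "real (16 ^ K) \<le> real (4 * K * (2 * K choose K) ^ 2)"
    using central_binomial_sq_lower[OF assms] by (simp only: of_nat_le_iff)
  then have "1 ^ 2 \<le> (2 * sqrt (real K) * binomial_mean_mass (2 * K) K) ^ 2"
    unfolding sq by (simp add: le_divide_eq)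
  then have "1 \<le> 2 * sqrt (real K) * binomial_mean_mass (2 * K) K"
    by (rule power2_le_imp_le) (simp add: binomial_mean_mass_nonneg)
  then show ?thesis
    using assms by (simp add: field_simps)
qed

lemma binomial_mean_mass_lower:
  assumes "1 \<le> K"
  shows "1 / (2 * sqrt (real (K + d))) \<le> binomial_mean_mass (2 * K + d) K"
  using assms
proof (induction d arbitrary: K)
  case 0
  then show ?case by (simp add: binomial_mean_mass_central_lower)
next
  case (Suc d)
  have "1 / (2 * sqrt (real (K + Suc d))) \<le> binomial_mean_mass (2 * Suc K + d) (Suc K)"
    using Suc.IH[of "Suc K"] by simp
  also have "\<dots> \<le> binomial_mean_mass (2 * K + Suc d) K"
    using binomial_mean_mass_Suc_Suc_le[of K "2 * K + Suc d"] Suc.prems by simp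
  finally show ?case .
qed

lemma pmf_binomial_at_mean_lower:
  assumes "1 \<le> k" "2 * k \<le> n"
  shows "1 / (2 * sqrt (real n)) \<le> pmf (binomial_pmf n (real k / real n)) k"
proof -
  have "1 / (2 * sqrt (real n)) \<le> 1 / (2 * sqrt (real (k + (n - 2 * k))))"
    using assms by (intro divide_left_mono mult_left_mono) auto
  also have "\<dots> \<le> binomial_mean_mass n k"
    using binomial_mean_mass_lower[of k "n - 2 * k"] assms by simp
  also have "\<dots> = pmf (binomial_pmf n (real k / real n)) k"
    using assms by (intro pmf_binomial_at_mean[symmetric]) auto
  finally show ?thesis .
qed

lemma tv_dist_bdd_above:
  "bdd_above (range (\<lambda>A. \<bar>measure_pmf.prob p A - measure_pmf.prob q A\<bar>))"
proof (rule bdd_aboveI2[where M = 1])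
  fix A
  have "measure_pmf.prob p A \<le> 1" "measure_pmf.prob q A \<le> 1"
    "0 \<le> measure_pmf.prob p A" "0 \<le> measure_pmf.prob q A" by auto
  then show "\<bar>measure_pmf.prob p A - measure_pmf.prob q A\<bar> \<le> 1"
    unfolding abs_le_iff by linarith
qed

lemma prob_diff_le_tv_dist: "measure_pmf.prob p A - measure_pmf.prob q A \<le> tv_dist p q"
proof -
  have "measure_pmf.prob p A - measure_pmf.prob q A \<le> \<bar>measure_pmf.prob p A - measure_pmf.prob q A\<bar>"
    by simp
  also have "\<dots> \<le> tv_dist p q"
    unfolding tv_dist_def by (rule cSUP_upper[OF _ tv_dist_bdd_above]) simp
  finally show ?thesis .
qed

lemma tv_dist_gt_imp_event:
  assumes "e < tv_dist p q"
  obtains A where "e < measure_pmf.prob p A - measure_pmf.prob q A"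
proof -
  obtain A where A: "e < \<bar>measure_pmf.prob p A - measure_pmf.prob q A\<bar>"
    using assms tv_dist_bdd_above[of p q] unfolding tv_dist_def by (subst (asm) less_cSUP_iff) auto
  have "measure_pmf.prob p (- A) - measure_pmf.prob q (- A) = measure_pmf.prob q A - measure_pmf.prob p A"
    using measure_pmf.prob_compl[of A p] measure_pmf.prob_compl[of A q] by (simp add: Compl_eq_Diff_UNIV)
  then show thesis
    using A that[of A] that[of "- A"] by (cases "measure_pmf.prob p A \<ge> measure_pmf.prob q A") auto
qed

lemma tv_dist_ge_threshold_test:
  fixes S :: "'a \<Rightarrow> real"
  assumes gap: "c' + 2 * h \<le> c"
    and low: "measure_pmf.prob p {y. S y \<le> c - h} \<le> \<alpha>"
    and high: "measure_pmf.prob q {y. c' + h \<le> S y} \<le> \<beta>"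
  shows "1 - \<alpha> - \<beta> \<le> tv_dist p q"
proof -
  define E where "E = {y. c - h \<le> S y}"
  have "1 - \<alpha> \<le> measure_pmf.prob p E"
  proof -
    have "measure_pmf.prob p (- E) \<le> \<alpha>"
      using low by (rule order_trans[rotated]) (auto simp: E_def intro!: measure_pmf.finite_measure_mono)
    then show ?thesis
      using measure_pmf.prob_compl[of E p] by (simp add: Compl_eq_Diff_UNIV)
  qed
  moreover have "measure_pmf.prob q E \<le> \<beta>"
    using gap by (intro order_trans[OF _ high] measure_pmf.finite_measure_mono) (auto simp: E_def)
  ultimately show ?thesis
    using prob_diff_le_tv_dist[of p E q] by linarith
qed

definition bitlist :: "nat \<Rightarrow> (nat \<Rightarrow> bool) \<Rightarrow> bool list" where
  "bitlist n f = map f [0..<n]"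

lemma length_bitlist [simp]: "length (bitlist n f) = n"
  by (simp add: bitlist_def)

lemma nth_bitlist [simp]: "i < n \<Longrightarrow> bitlist n f ! i = f i"
  by (simp add: bitlist_def)

lemma bij_betw_bitlist: "bij_betw (bitlist n) (PiE_dflt {..<n} False (\<lambda>_. UNIV)) (bitstrings n)"
proof (rule bij_betwI[where g = "\<lambda>xs i. if i < n then xs ! i else False"])
  show "bitlist n \<in> PiE_dflt {..<n} False (\<lambda>_. UNIV) \<rightarrow> bitstrings n"
    by (auto simp: bitstrings_def)
  show "(\<lambda>xs i. if i < n then xs ! i else False) \<in> bitstrings n \<rightarrow> PiE_dflt {..<n} False (\<lambda>_. UNIV)"
    by (auto simp: PiE_dflt_def)
  show "(\<lambda>i. if i < n then bitlist n f ! i else False) = f" if "f \<in> PiE_dflt {..<n} False (\<lambda>_. UNIV)" for f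
    using that by (auto simp: PiE_dflt_def fun_eq_iff)
  show "bitlist n (\<lambda>i. if i < n then xs ! i else False) = xs" if "xs \<in> bitstrings n" for xs
    using that by (auto simp: bitstrings_def bitlist_def intro: nth_equalityI)
qed

lemma unif_bits_eq_Pi_pmf:
  "unif_bits m = map_pmf (bitlist m) (Pi_pmf {..<m} False (\<lambda>_. bernoulli_pmf (1/2)))"
proof -
  have "Pi_pmf {..<m} False (\<lambda>_. bernoulli_pmf (1/2)) = pmf_of_set (PiE_dflt {..<m} False (\<lambda>_. UNIV))"
    by (simp add: bernoulli_pmf_half_conv_pmf_of_set Pi_pmf_of_set)
  moreover have "map_pmf (bitlist m) (pmf_of_set (PiE_dflt {..<m} False (\<lambda>_. UNIV))) = pmf_of_set (bitstrings m)"
    by (rule map_pmf_of_set_bij_betw[OF bij_betw_bitlist]) auto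
  ultimately show ?thesis
    by (simp add: unif_bits_def)
qed

lemma count_list_bitlist: "count_list (bitlist n f) True = card {i \<in> {..<n}. f i}"
proof (induction n)
  case (Suc n)
  have "{i \<in> {..<Suc n}. f i} = {i \<in> {..<n}. f i} \<union> (if f n then {n} else {})"
    by (auto simp: less_Suc_eq)
  then show ?case
    using Suc by (simp add: bitlist_def)
qed (simp add: bitlist_def)

lemma nth_eq_if_agree_on_dep_set:
  assumes "x \<in> bitstrings m" "y \<in> bitstrings m" "\<forall>i \<in> dep_set g m j. x ! i = y ! i"
  shows "g x ! j = g y ! j"
  using assms
proof (induction "card {i. i < m \<and> x ! i \<noteq> y ! i}" arbitrary: x)
  case 0
  then have "\<forall>i < m. x ! i = y ! i"
    by auto
  then have "x = y"
    using "0.prems" by (auto simp: bitstrings_def intro: nth_equalityI)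
  then show ?case by simp
next
  case (Suc d x)
  then obtain i where i: "i < m" "x ! i \<noteq> y ! i"
    by (metis (mono_tags, lifting) Collect_empty_eq card.empty nat.distinct(1))
  define x' where "x' = x[i := \<not> x ! i]"
  have "i \<notin> dep_set g m j"
    using i Suc.prems(3) by auto
  then have "g x ! j = g x' ! j"
    using i Suc.prems(1) unfolding dep_set_def x'_def by blast
  have x'_nth: "x' ! i' = (if i' = i then \<not> x ! i else x ! i')" for i'
    using i Suc.prems(1) by (simp add: x'_def bitstrings_def nth_list_update)
  have "{i'. i' < m \<and> x' ! i' \<noteq> y ! i'} = {i'. i' < m \<and> x ! i' \<noteq> y ! i'} - {i}"
    using i(2) by (auto simp: x'_nth)
  then have "d = card {i'. i' < m \<and> x' ! i' \<noteq> y ! i'}"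
    using i Suc.hyps(2) by simp
  moreover have "x' \<in> bitstrings m"
    using Suc.prems(1) by (simp add: x'_def bitstrings_def)
  moreover have "\<forall>i' \<in> dep_set g m j. x' ! i' = y ! i'"
    using Suc.prems(3) \<open>i \<notin> dep_set g m j\<close> by (auto simp: x'_nth)
  ultimately have "g x' ! j = g y ! j"
    using Suc.hyps(1) Suc.prems(2) by blast
  with \<open>g x ! j = g x' ! j\<close> show ?case by simp
qed

lemma dep_set_subset_nbhd_inputs: "j \<in> nbhd g m n i \<Longrightarrow> dep_set g m j \<subseteq> nbhd_inputs g m n i"
  unfolding nbhd_inputs_def by auto

lemma nbhd_inputs_subset: "nbhd_inputs g m n i \<subseteq> {..<m}"
  unfolding nbhd_inputs_def dep_set_def by auto

lemma nbhd_subset: "nbhd g m n i \<subseteq> {..<n}"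
  unfolding nbhd_def by auto

lemma nbhd_disjoint_if_nbhd_inputs_disjoint:
  assumes "nbhd_inputs g m n i \<inter> nbhd_inputs g m n i' = {}"
  shows "nbhd g m n i \<inter> nbhd g m n i' = {}"
proof (rule ccontr)
  assume "nbhd g m n i \<inter> nbhd g m n i' \<noteq> {}"
  then obtain j where "j \<in> nbhd g m n i" "j \<in> nbhd g m n i'"
    by blast
  moreover from this have "dep_set g m j \<noteq> {}"
    unfolding nbhd_def by auto
  ultimately show False
    using assms dep_set_subset_nbhd_inputs by blast
qed

section \<open>Hoeffding's inequality for block-local statistics\<close>

lemma measurable_extend_dflt:
  fixes K :: "'d set"
  assumes "finite K"
  shows "(\<lambda>z i. if i \<in> K then z i else dflt) \<in>
    measurable (PiM K (\<lambda>_. count_space (UNIV :: 'b :: finite set))) (count_space (PiE_dflt K dflt (\<lambda>_. UNIV)))"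
proof -
  let ?ext = "\<lambda>z i. if i \<in> K then z i else dflt"
  let ?M = "PiM K (\<lambda>_. count_space (UNIV :: 'b set))"
  have "?ext -` {f} \<inter> space ?M \<in> sets ?M" if "f \<in> PiE_dflt K dflt (\<lambda>_. UNIV)" for f
  proof -
    have "?ext -` {f} \<inter> space ?M = PiE K (\<lambda>i. {f i})"
      using that by (auto simp: space_PiM PiE_dflt_def fun_eq_iff PiE_def extensional_def)
    also have "\<dots> \<in> sets ?M"
      using assms by (intro sets_PiM_I_finite) auto
    finally show ?thesis .
  qed
  moreover have "finite (PiE_dflt K dflt (\<lambda>_. UNIV :: 'b set))"
    using assms by auto
  ultimately show ?thesis
    by (subst measurable_count_space_eq2) (auto simp: PiE_dflt_def)
qed

lemma indep_vars_Pi_pmf_blocks: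
  fixes Y :: "'i \<Rightarrow> ('d \<Rightarrow> 'b :: finite) \<Rightarrow> real" and K :: "'i \<Rightarrow> 'd set"
  assumes "finite D" and K_sub: "\<And>a. a \<in> I \<Longrightarrow> K a \<subseteq> D" and "disjoint_family_on K I"
    and local: "\<And>a x. a \<in> I \<Longrightarrow> Y a x = Y a (\<lambda>i. if i \<in> K a then x i else dflt)"
  shows "prob_space.indep_vars (measure_pmf (Pi_pmf D dflt Q)) (\<lambda>_. borel) Y I"
proof -
  let ?M = "measure_pmf (Pi_pmf D dflt Q)"
  let ?Y' = "\<lambda>a \<omega>. Y a (\<lambda>i. if i \<in> K a then restrict \<omega> (K a) i else dflt)"
  have "prob_space.indep_vars ?M (\<lambda>a. PiM (K a) (\<lambda>_. count_space UNIV)) (\<lambda>a \<omega>. restrict \<omega> (K a)) I"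
    using assms(1-3)
    by (intro prob_space.indep_vars_restrict[OF measure_pmf.prob_space_axioms indep_vars_Pi_pmf]) auto
  then have "prob_space.indep_vars ?M (\<lambda>_. borel) ?Y' I"
  proof (rule prob_space.indep_vars_compose2[OF measure_pmf.prob_space_axioms])
    fix a assume "a \<in> I"
    then have "finite (K a)"
      using K_sub \<open>finite D\<close> by (blast intro: finite_subset)
    then have "Y a \<circ> (\<lambda>z i. if i \<in> K a then z i else dflt) \<in> measurable (PiM (K a) (\<lambda>_. count_space UNIV)) borel"
      by (intro measurable_comp[OF measurable_extend_dflt] borel_measurable_count_space)
    then show "(\<lambda>z. Y a (\<lambda>i. if i \<in> K a then z i else dflt)) \<in> measurable (PiM (K a) (\<lambda>_. count_space UNIV)) borel"
      by (simp only: comp_def)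
  qed
  moreover have "?Y' a = Y a" if "a \<in> I" for a
    using local[OF that] by (simp add: fun_eq_iff cong: if_cong)
  ultimately show ?thesis
    by (simp cong: prob_space.indep_vars_cong[OF measure_pmf.prob_space_axioms])
qed

lemma Pi_pmf_block_sum_tails:
  fixes Y :: "'i \<Rightarrow> ('d \<Rightarrow> 'b :: finite) \<Rightarrow> real" and K :: "'i \<Rightarrow> 'd set"
    and D :: "'d set" and dflt :: 'b and Q :: "'d \<Rightarrow> 'b pmf"
  defines "M \<equiv> Pi_pmf D dflt Q"
  assumes "finite D" "finite I" "I \<noteq> {}"
    and "\<And>a. a \<in> I \<Longrightarrow> K a \<subseteq> D" and "disjoint_family_on K I"
    and "\<And>a x. a \<in> I \<Longrightarrow> Y a x = Y a (\<lambda>i. if i \<in> K a then x i else dflt)"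
    and Y01: "\<And>a x. a \<in> I \<Longrightarrow> Y a x \<in> {0..1}"
    and "0 \<le> t"
  shows "measure_pmf.prob M {x. (\<Sum>a\<in>I. measure_pmf.expectation M (Y a)) + t \<le> (\<Sum>a\<in>I. Y a x)}
           \<le> exp (- 2 * t\<^sup>2 / real (card I))"
    and "measure_pmf.prob M {x. (\<Sum>a\<in>I. Y a x) \<le> (\<Sum>a\<in>I. measure_pmf.expectation M (Y a)) - t}
           \<le> exp (- 2 * t\<^sup>2 / real (card I))"
proof -
  interpret Hoeffding_ineq "measure_pmf M" I Y "\<lambda>_. 0" "\<lambda>_. 1" "\<Sum>a\<in>I. measure_pmf.expectation M (Y a)"
  proof unfold_locales
    show "prob_space.indep_vars (measure_pmf M) (\<lambda>_. borel) Y I"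
      unfolding M_def using assms(2,5-7) by (rule indep_vars_Pi_pmf_blocks)
  qed (use assms(3) Y01 in auto)
  have "(\<Sum>a\<in>I. ((\<lambda>_. 1::real) a - (\<lambda>_. 0) a)\<^sup>2) = real (card I)"
    by simp
  moreover have "0 < real (card I)"
    using assms(3,4) by (simp add: card_gt_0_iff)
  ultimately show "measure_pmf.prob M {x. (\<Sum>a\<in>I. measure_pmf.expectation M (Y a)) + t \<le> (\<Sum>a\<in>I. Y a x)}
           \<le> exp (- 2 * t\<^sup>2 / real (card I))"
    and "measure_pmf.prob M {x. (\<Sum>a\<in>I. Y a x) \<le> (\<Sum>a\<in>I. measure_pmf.expectation M (Y a)) - t}
           \<le> exp (- 2 * t\<^sup>2 / real (card I))"
    using Hoeffding_ineq_ge[OF \<open>0 \<le> t\<close>] Hoeffding_ineq_le[OF \<open>0 \<le> t\<close>] by simp_all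
qed

section \<open>Fixed-weight strings as a conditioned product measure\<close>

lemma prob_D_weight_le:
  assumes "0 < \<gamma>" "\<gamma> < 1" "k \<le> n"
  shows "measure_pmf.prob (D_weight n k) E \<le>
    measure_pmf.prob (Pi_pmf {..<n} False (\<lambda>_. bernoulli_pmf \<gamma>)) (bitlist n -` E) / pmf (binomial_pmf n \<gamma>) k"
proof -
  define \<mu> where "\<mu> = Pi_pmf {..<n} False (\<lambda>_. bernoulli_pmf \<gamma>)"
  define W where "W = {f \<in> PiE_dflt {..<n} False (\<lambda>_. UNIV). card {i \<in> {..<n}. f i} = k}"
  have "finite W"
    unfolding W_def by (rule finite_subset[of _ "PiE_dflt {..<n} False (\<lambda>_. UNIV)"]) auto
  have "{i \<in> {..<n}. i < k} = {..<k}"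
    using assms(3) by auto
  then have "(\<lambda>i. i < k) \<in> W"
    unfolding W_def by (auto simp: PiE_dflt_def)
  then have "W \<noteq> {}" by blast
  have "bij_betw (bitlist n) W {xs \<in> bitstrings n. count_list xs True = k}"
  proof (rule bij_betw_subset[OF bij_betw_bitlist])
    show "W \<subseteq> PiE_dflt {..<n} False (\<lambda>_. UNIV)"
      unfolding W_def by blast
    have "bitlist n ` PiE_dflt {..<n} False (\<lambda>_. UNIV) = bitstrings n"
      by (rule bij_betw_imp_surj_on[OF bij_betw_bitlist])
    then show "bitlist n ` W = {xs \<in> bitstrings n. count_list xs True = k}"
    proof (intro equalityI subsetI)
      fix xs assume xs: "xs \<in> {xs \<in> bitstrings n. count_list xs True = k}"
      then obtain f where "f \<in> PiE_dflt {..<n} False (\<lambda>_. UNIV)" "xs = bitlist n f"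
        using \<open>bitlist n ` _ = _\<close> by blast
      with xs show "xs \<in> bitlist n ` W"
        unfolding W_def by (auto simp: count_list_bitlist)
    qed (auto simp: W_def count_list_bitlist)
  qed
  then have D: "D_weight n k = map_pmf (bitlist n) (pmf_of_set W)"
    unfolding D_weight_def using \<open>W \<noteq> {}\<close> \<open>finite W\<close> by (rule map_pmf_of_set_bij_betw[symmetric])
  \<comment> \<open>the product measure is constant on the weight-\<open>k\<close> slice, so conditioning it on the slice gives \<open>D_k\<close>\<close>
  have pmf_W: "pmf \<mu> f = \<gamma> ^ k * (1 - \<gamma>) ^ (n - k)" if "f \<in> W" for f
  proof -
    have "pmf \<mu> f = (\<Prod>i\<in>{..<n}. pmf (bernoulli_pmf \<gamma>) (f i))"
      using that unfolding \<mu>_def W_def by (subst pmf_Pi) (auto simp: PiE_dflt_def)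
    also have "\<dots> = (\<Prod>i\<in>{..<n}. if f i then \<gamma> else 1 - \<gamma>)"
      using assms(1,2) by (intro prod.cong) auto
    also have "\<dots> = (\<Prod>i\<in>{..<n} \<inter> {i. f i}. \<gamma>) * (\<Prod>i\<in>{..<n} \<inter> - {i. f i}. 1 - \<gamma>)"
      by (rule prod.If_cases) simp
    also have "{..<n} \<inter> - {i. f i} = {..<n} - {i \<in> {..<n}. f i}"
      by auto
    also have "{..<n} \<inter> {i. f i} = {i \<in> {..<n}. f i}"
      by auto
    also have "(\<Prod>i\<in>{i \<in> {..<n}. f i}. \<gamma>) * (\<Prod>i\<in>{..<n} - {i \<in> {..<n}. f i}. 1 - \<gamma>)
        = \<gamma> ^ card {i \<in> {..<n}. f i} * (1 - \<gamma>) ^ card ({..<n} - {i \<in> {..<n}. f i})"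
      by simp
    also have "card ({..<n} - {i \<in> {..<n}. f i}) = n - k"
      using that by (subst card_Diff_subset) (auto simp: W_def)
    finally show ?thesis
      using that by (simp add: W_def)
  qed
  have "binomial_pmf n \<gamma> = map_pmf (\<lambda>f. card {i \<in> {..<n}. f i}) \<mu>"
    unfolding \<mu>_def using assms(1,2) by (intro binomial_pmf_altdef') auto
  then have "pmf (binomial_pmf n \<gamma>) k = measure_pmf.prob \<mu> {f. card {i \<in> {..<n}. f i} = k}"
    by (simp add: pmf_map vimage_def)
  also have "\<dots> = measure_pmf.prob \<mu> W"
  proof (rule measure_eq_AE, rule AE_pmfI)
    fix f assume "f \<in> set_pmf \<mu>"
    then show "f \<in> {f. card {i \<in> {..<n}. f i} = k} \<longleftrightarrow> f \<in> W"
      using set_Pi_pmf_subset[of "{..<n}" False "\<lambda>_. bernoulli_pmf \<gamma>"]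
      unfolding \<mu>_def W_def by (auto simp: PiE_dflt_def)
  qed auto
  finally have bin: "pmf (binomial_pmf n \<gamma>) k = measure_pmf.prob \<mu> W" .
  have "measure_pmf.prob (D_weight n k) E = real (card (W \<inter> bitlist n -` E)) / real (card W)"
    unfolding D using \<open>W \<noteq> {}\<close> \<open>finite W\<close> by (simp add: measure_pmf_of_set)
  also have "\<dots> = measure_pmf.prob \<mu> (bitlist n -` E \<inter> W) / measure_pmf.prob \<mu> W"
  proof -
    have "measure_pmf.prob \<mu> W = real (card W) * (\<gamma> ^ k * (1 - \<gamma>) ^ (n - k))"
      using \<open>finite W\<close> by (simp add: measure_measure_pmf_finite pmf_W)
    moreover have "measure_pmf.prob \<mu> (bitlist n -` E \<inter> W) = real (card (W \<inter> bitlist n -` E)) * (\<gamma> ^ k * (1 - \<gamma>) ^ (n - k))"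
      using \<open>finite W\<close> by (simp add: measure_measure_pmf_finite pmf_W Int_commute)
    ultimately show ?thesis
      using assms(1,2) by simp
  qed
  also have "\<dots> \<le> measure_pmf.prob \<mu> (bitlist n -` E) / measure_pmf.prob \<mu> W"
    by (intro divide_right_mono measure_pmf.finite_measure_mono) auto
  finally show ?thesis
    unfolding bin \<mu>_def .
qed

section \<open>Counting passed tests\<close>

definition restrict_bits :: "nat set \<Rightarrow> bool list \<Rightarrow> nat \<Rightarrow> bool" where
  "restrict_bits T y j = (if j \<in> T then y ! j else False)"

lemma marginal_eq_map_pmf: "marginal P T = map_pmf (restrict_bits T) P"
  unfolding marginal_def restrict_bits_def ..

definition tests_passed :: "nat \<Rightarrow> (nat \<Rightarrow> nat set) \<Rightarrow> (nat \<Rightarrow> (nat \<Rightarrow> bool) set) \<Rightarrow> bool list \<Rightarrow> real" where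
  "tests_passed r N B y = (\<Sum>a<r. indicator (B a) (restrict_bits (N a) y))"

lemma local_tests_passed_lower_tail:
  fixes g :: "bool list \<Rightarrow> bool list" and m :: nat
  defines "P \<equiv> map_pmf g (unif_bits m)"
  assumes "1 \<le> r" and J_sub: "\<And>a. a < r \<Longrightarrow> J a \<subseteq> {..<m}" and "disjoint_family_on J {..<r}"
    and dep: "\<And>a j. a < r \<Longrightarrow> j \<in> N a \<Longrightarrow> dep_set g m j \<subseteq> J a" and "0 \<le> t"
  shows "measure_pmf.prob P {y. tests_passed r N B y \<le> (\<Sum>a<r. measure_pmf.prob (marginal P (N a)) (B a)) - t}
           \<le> exp (- 2 * t\<^sup>2 / real r)"
proof -
  define Pm where "Pm = Pi_pmf {..<m} False (\<lambda>_. bernoulli_pmf (1/2))"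
  define Y :: "nat \<Rightarrow> (nat \<Rightarrow> bool) \<Rightarrow> real"
    where "Y a = indicator {x. restrict_bits (N a) (g (bitlist m x)) \<in> B a}" for a
  have P_eq: "P = map_pmf (\<lambda>x. g (bitlist m x)) Pm"
    unfolding P_def Pm_def unif_bits_eq_Pi_pmf by (simp add: map_pmf_comp)
  have mean: "measure_pmf.expectation Pm (Y a) = measure_pmf.prob (marginal P (N a)) (B a)" for a
    unfolding Y_def P_eq marginal_eq_map_pmf by (simp add: vimage_def)
  have local: "Y a x = Y a (\<lambda>i. if i \<in> J a then x i else False)" if "a \<in> {..<r}" for a x
  proof -
    define x' where "x' = (\<lambda>i. if i \<in> J a then x i else False)"
    have "g (bitlist m x) ! j = g (bitlist m x') ! j" if "j \<in> N a" for j
      using dep[of a j] \<open>a \<in> {..<r}\<close> that dep_set_def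
      by (intro nth_eq_if_agree_on_dep_set) (auto simp: bitstrings_def x'_def)
    then have "restrict_bits (N a) (g (bitlist m x)) = restrict_bits (N a) (g (bitlist m x'))"
      by (simp add: restrict_bits_def fun_eq_iff)
    then show ?thesis
      unfolding Y_def x'_def by (simp add: indicator_def)
  qed
  have "measure_pmf.prob P {y. tests_passed r N B y \<le> (\<Sum>a<r. measure_pmf.prob (marginal P (N a)) (B a)) - t}
      = measure_pmf.prob Pm {x. (\<Sum>a<r. Y a x) \<le> (\<Sum>a<r. measure_pmf.expectation Pm (Y a)) - t}"
  proof -
    have "tests_passed r N B (g (bitlist m x)) = (\<Sum>a<r. Y a x)" for x
      unfolding tests_passed_def Y_def by (simp add: indicator_def)
    moreover have "(\<Sum>a<r. measure_pmf.prob (marginal P (N a)) (B a)) = (\<Sum>a<r. measure_pmf.expectation Pm (Y a))"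
      by (simp add: mean)
    ultimately show ?thesis
      unfolding P_eq by (simp add: vimage_def)
  qed
  also have "\<dots> \<le> exp (- 2 * t\<^sup>2 / real (card {..<r}))"
    unfolding Pm_def
    by (rule Pi_pmf_block_sum_tails(2)[where Y = Y and K = J and I = "{..<r}" and dflt = False,
          OF _ _ _ _ _ local])
      (use assms(2-4,6) in \<open>auto simp: Y_def lessThan_empty_iff\<close>)
  finally show ?thesis by simp
qed

lemma biased_tests_passed_upper_tail:
  fixes n :: nat and \<gamma> :: real
  defines "\<mu> \<equiv> Pi_pmf {..<n} False (\<lambda>_. bernoulli_pmf \<gamma>)"
  assumes "1 \<le> r" and N_sub: "\<And>a. a < r \<Longrightarrow> N a \<subseteq> {..<n}" and "disjoint_family_on N {..<r}"
    and "0 \<le> t"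
  shows "measure_pmf.prob \<mu> (bitlist n -` {y. (\<Sum>a<r. measure_pmf.prob (biased_bits (N a) \<gamma>) (B a)) + t \<le> tests_passed r N B y})
           \<le> exp (- 2 * t\<^sup>2 / real r)"
proof -
  define Z :: "nat \<Rightarrow> (nat \<Rightarrow> bool) \<Rightarrow> real"
    where "Z a = indicator {f. (\<lambda>i. if i \<in> N a then f i else False) \<in> B a}" for a
  have restrict_bitlist: "restrict_bits (N a) (bitlist n f) = (\<lambda>i. if i \<in> N a then f i else False)" if "a < r" for a f
    using N_sub[OF that] by (auto simp: restrict_bits_def fun_eq_iff)
  have local: "Z a f = Z a (\<lambda>i. if i \<in> N a then f i else False)" for a f
  proof -
    have "(\<lambda>i. if i \<in> N a then (if i \<in> N a then f i else False) else False) = (\<lambda>i. if i \<in> N a then f i else False)"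
      by (simp add: fun_eq_iff)
    then show ?thesis
      unfolding Z_def indicator_def by (simp only: mem_Collect_eq)
  qed
  have mean: "measure_pmf.expectation \<mu> (Z a) = measure_pmf.prob (biased_bits (N a) \<gamma>) (B a)" if "a < r" for a
  proof -
    have "biased_bits (N a) \<gamma> = map_pmf (\<lambda>f i. if i \<in> N a then f i else False) \<mu>"
      unfolding biased_bits_def \<mu>_def using N_sub[OF that] by (intro Pi_pmf_subset) auto
    then show ?thesis
      by (simp add: Z_def vimage_def)
  qed
  have "measure_pmf.prob \<mu> (bitlist n -` {y. (\<Sum>a<r. measure_pmf.prob (biased_bits (N a) \<gamma>) (B a)) + t \<le> tests_passed r N B y})
      = measure_pmf.prob \<mu> {f. (\<Sum>a<r. measure_pmf.expectation \<mu> (Z a)) + t \<le> (\<Sum>a<r. Z a f)}"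
  proof -
    have "tests_passed r N B (bitlist n f) = (\<Sum>a<r. Z a f)" for f
      unfolding tests_passed_def Z_def by (intro sum.cong) (auto simp: restrict_bitlist indicator_def)
    moreover have "(\<Sum>a<r. measure_pmf.prob (biased_bits (N a) \<gamma>) (B a)) = (\<Sum>a<r. measure_pmf.expectation \<mu> (Z a))"
      by (intro sum.cong) (simp_all add: mean)
    ultimately show ?thesis
      by (simp only: vimage_def mem_Collect_eq)
  qed
  also have "\<dots> \<le> exp (- 2 * t\<^sup>2 / real (card {..<r}))"
    unfolding \<mu>_def
    by (rule Pi_pmf_block_sum_tails(1)[where Y = Z and K = N and I = "{..<r}" and dflt = False,
          OF _ _ _ _ _ local])
      (use assms(2-5) in \<open>auto simp: Z_def lessThan_empty_iff\<close>)
  finally show ?thesis by simp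
qed

lemma D_weight_tests_passed_upper_tail:
  assumes "1 \<le> k" "2 * k \<le> n" "1 \<le> r" "\<And>a. a < r \<Longrightarrow> N a \<subseteq> {..<n}"
    and "disjoint_family_on N {..<r}" "0 \<le> t"
  shows "measure_pmf.prob (D_weight n k)
           {y. (\<Sum>a<r. measure_pmf.prob (biased_bits (N a) (real k / real n)) (B a)) + t \<le> tests_passed r N B y}
         \<le> 2 * sqrt (real n) * exp (- 2 * t\<^sup>2 / real r)"
proof -
  let ?\<gamma> = "real k / real n"
  let ?E = "{y. (\<Sum>a<r. measure_pmf.prob (biased_bits (N a) ?\<gamma>) (B a)) + t \<le> tests_passed r N B y}"
  have mass: "1 / (2 * sqrt (real n)) \<le> pmf (binomial_pmf n ?\<gamma>) k"
    using assms(1,2) by (rule pmf_binomial_at_mean_lower)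
  have "0 < 1 / (2 * sqrt (real n))"
    using assms(1,2) by simp
  have "measure_pmf.prob (D_weight n k) ?E
      \<le> measure_pmf.prob (Pi_pmf {..<n} False (\<lambda>_. bernoulli_pmf ?\<gamma>)) (bitlist n -` ?E) / pmf (binomial_pmf n ?\<gamma>) k"
    using assms(1,2) by (intro prob_D_weight_le) auto
  also have "\<dots> \<le> exp (- 2 * t\<^sup>2 / real r) / (1 / (2 * sqrt (real n)))"
    using mass \<open>0 < 1 / (2 * sqrt (real n))\<close> assms(3-6)
    by (intro frac_le biased_tests_passed_upper_tail) auto
  finally show ?thesis
    by (simp add: mult.commute)
qed

lemma tv_dist_D_weight_ge_of_distinguishable_blocks:
  fixes g :: "bool list \<Rightarrow> bool list" and N J :: "nat \<Rightarrow> nat set" and m n k r :: nat and \<epsilon> :: real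
  defines "P \<equiv> map_pmf g (unif_bits m)" and "\<gamma> \<equiv> real k / real n"
  assumes k: "1 \<le> k" "2 * k \<le> n" and r: "1 \<le> r" and "0 \<le> \<epsilon>"
    and J_sub: "\<And>a. a < r \<Longrightarrow> J a \<subseteq> {..<m}" and J_disj: "disjoint_family_on J {..<r}"
    and N_sub: "\<And>a. a < r \<Longrightarrow> N a \<subseteq> {..<n}" and N_disj: "disjoint_family_on N {..<r}"
    and dep: "\<And>a j. a < r \<Longrightarrow> j \<in> N a \<Longrightarrow> dep_set g m j \<subseteq> J a"
    and distinguishable: "\<And>a. a < r \<Longrightarrow> \<epsilon> < tv_dist (marginal P (N a)) (biased_bits (N a) \<gamma>)"
  shows "1 - (1 + 2 * sqrt (real n)) * exp (- (\<epsilon>\<^sup>2 * real r) / 2) \<le> tv_dist P (D_weight n k)"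
proof -
  define h where "h = \<epsilon> * real r / 2"
  have "\<forall>a<r. \<exists>A. \<epsilon> < measure_pmf.prob (marginal P (N a)) A - measure_pmf.prob (biased_bits (N a) \<gamma>) A"
    using distinguishable tv_dist_gt_imp_event by metis
  then obtain B where B: "\<And>a. a < r \<Longrightarrow>
      \<epsilon> < measure_pmf.prob (marginal P (N a)) (B a) - measure_pmf.prob (biased_bits (N a) \<gamma>) (B a)"
    by metis
  have "(\<Sum>a<r. \<epsilon>) \<le> (\<Sum>a<r. measure_pmf.prob (marginal P (N a)) (B a) - measure_pmf.prob (biased_bits (N a) \<gamma>) (B a))"
    by (intro sum_mono less_imp_le B) simp
  then have gap: "(\<Sum>a<r. measure_pmf.prob (biased_bits (N a) \<gamma>) (B a)) + 2 * h
      \<le> (\<Sum>a<r. measure_pmf.prob (marginal P (N a)) (B a))"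
    by (simp add: h_def sum_subtractf mult.commute)
  have exp_eq: "exp (- (\<epsilon>\<^sup>2 * real r) / 2) = exp (- 2 * h\<^sup>2 / real r)"
    using r by (simp add: h_def power2_eq_square field_simps)
  have "0 \<le> h"
    using \<open>0 \<le> \<epsilon>\<close> by (simp add: h_def)
  have "measure_pmf.prob P {y. tests_passed r N B y \<le> (\<Sum>a<r. measure_pmf.prob (marginal P (N a)) (B a)) - h}
      \<le> exp (- (\<epsilon>\<^sup>2 * real r) / 2)"
    unfolding exp_eq P_def using r J_sub J_disj dep \<open>0 \<le> h\<close> by (intro local_tests_passed_lower_tail)
  moreover have "measure_pmf.prob (D_weight n k)
      {y. (\<Sum>a<r. measure_pmf.prob (biased_bits (N a) \<gamma>) (B a)) + h \<le> tests_passed r N B y}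
      \<le> 2 * sqrt (real n) * exp (- (\<epsilon>\<^sup>2 * real r) / 2)"
    unfolding exp_eq \<gamma>_def using k r N_sub N_disj \<open>0 \<le> h\<close> by (intro D_weight_tests_passed_upper_tail)
  ultimately have "1 - exp (- (\<epsilon>\<^sup>2 * real r) / 2) - 2 * sqrt (real n) * exp (- (\<epsilon>\<^sup>2 * real r) / 2)
      \<le> tv_dist P (D_weight n k)"
    by (rule tv_dist_ge_threshold_test[OF gap])
  then show ?thesis
    by (simp add: algebra_simps)
qed

lemma one_plus_two_sqrt_le:
  fixes x :: real
  assumes "2 \<le> x"
  shows "1 + 2 * sqrt x \<le> 2 * sqrt (2 * x)"
proof -
  have "sqrt 2 \<le> 3 / 2"
    by (rule real_le_lsqrt) (auto simp: power2_eq_square)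
  then have "1 \<le> (2 * sqrt 2 - 2) * sqrt 2"
    by (simp add: algebra_simps)
  also have "\<dots> \<le> (2 * sqrt 2 - 2) * sqrt x"
    using assms by (intro mult_left_mono) auto
  finally show ?thesis
    by (simp add: real_sqrt_mult algebra_simps)
qed

theorem mainTheorem9:
  fixes g :: "bool list \<Rightarrow> bool list" and m n d k r' :: nat
    and idx :: "nat \<Rightarrow> nat" and \<gamma> \<epsilon> :: real
  assumes k_ge: "1 \<le> k" and k_le: "real k \<le> real n / 2"
    and gamma_def: "\<gamma> = real k / real n"
    and eps: "0 \<le> \<epsilon>" "\<epsilon> \<le> 1"
    and g_len: "\<forall>x \<in> bitstrings m. length (g x) = n"
    and local: "is_local g m n d"
    and r_pos: "1 \<le> r'"
    and idx_range: "\<forall>a < r'. idx a < n"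
    and non_connected: "\<forall>a < r'. \<forall>b < r'. a \<noteq> b \<longrightarrow>
          nbhd_inputs g m n (idx a) \<inter> nbhd_inputs g m n (idx b) = {}"
    and type1: "\<forall>a < r'. tv_dist (marginal (map_pmf g (unif_bits m)) (nbhd g m n (idx a)))
                                  (biased_bits (nbhd g m n (idx a)) \<gamma>) > \<epsilon>"
  shows "tv_dist (map_pmf g (unif_bits m)) (D_weight n k)
           \<ge> 1 - 2 * sqrt (2 * real n) * exp (- (\<epsilon>^2 * real r') / 2)"
proof -
  \<comment> \<open>The bound does not depend on the locality \<open>d\<close>.\<close>
  have "2 * k \<le> n"
    using k_le by linarith
  have "disjoint_family_on (\<lambda>a. nbhd_inputs g m n (idx a)) {..<r'}"
    using non_connected unfolding disjoint_family_on_def by blast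
  moreover have "disjoint_family_on (\<lambda>a. nbhd g m n (idx a)) {..<r'}"
    using non_connected nbhd_disjoint_if_nbhd_inputs_disjoint unfolding disjoint_family_on_def by blast
  ultimately have "1 - (1 + 2 * sqrt (real n)) * exp (- (\<epsilon>\<^sup>2 * real r') / 2)
      \<le> tv_dist (map_pmf g (unif_bits m)) (D_weight n k)"
    using k_ge \<open>2 * k \<le> n\<close> r_pos eps(1) type1 unfolding gamma_def
    by (intro tv_dist_D_weight_ge_of_distinguishable_blocks[where N = "\<lambda>a. nbhd g m n (idx a)"
        and J = "\<lambda>a. nbhd_inputs g m n (idx a)"])
      (auto simp: nbhd_inputs_subset nbhd_subset dep_set_subset_nbhd_inputs)
  moreover have "1 + 2 * sqrt (real n) \<le> 2 * sqrt (2 * real n)"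
    using one_plus_two_sqrt_le[of n] \<open>2 * k \<le> n\<close> k_ge by simp
  ultimately show ?thesis
    by (smt (verit) exp_ge_zero mult_right_mono)
qed

end
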